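(* If a perfect 2-D $(u\times v,4,2)$-OOC exists (equivalently, a strictly $v$-cyclic $SQS(u\times v)$), then $uv\equiv 2,4\pmod 6$ and $u(uv-1)(uv-2)\equiv 0\pmod{24}$. Equivalently, one of the following holds: (1) $u\equiv 1,5\pmod{12}$ and $v\equiv 2,10\pmod{24}$; (2) $u\equiv 7,11\pmod{12}$ and $v\equiv 14,22\pmod{24}$; (3) $u\equiv 2,4\pmod 6$ and $v\equiv 1,5\pmod 6$; (4) $u\equiv 4,8\pmod{12}$ and $v\equiv 2,4\pmod 6$.
   Context: A 2-D $(u\times v,4,2)$-OOC is a family $\mathcal C$ of $u\times v$ $(0,1)$-matrices of Hamming weight $4$ such that for all $A=(a_{ij}),B=(b_{ij})\in\mathcal C$ and every integer $r$ with $A\ne B$ or $r\not\equiv0\pmod v$, $\sum_{i,j}a_{ij}b_{i,j+r}\le 2$ (column indices mod $v$). It is perfect if, identifying each matrix with its support in $I_u\times Z_v$ ($I_u=\{0,\dots,u-1\}$), the supports of all $v$ cyclic column shifts of all codewords cover every $3$-subset of $I_u\times Z_v$ exactly once; equivalently its size is $u(uv-1)(uv-2)/24$. This is the same as a strictly $v$-cyclic Steiner quadruple system $SQS(u\times v)$ on $I_u\times Z_v$ (a set of $4$-subsets, closed under $(i,x)\mapsto(i,x+1)$, covering every $3$-subset exactly once, with each block having trivial stabilizer in $Z_v$). *)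

theory Defs
  imports Main
begin

text \<open>Point set I_u x Z_v, with Z_v represented by {0..<v}.\<close>
definition pts :: "nat \<Rightarrow> nat \<Rightarrow> (nat \<times> nat) set" where
  "pts u v = {0..<u} \<times> {0..<v}"

definition shift :: "nat \<Rightarrow> nat \<Rightarrow> nat \<times> nat \<Rightarrow> nat \<times> nat" where
  "shift v r = (\<lambda>(i, x). (i, (x + r) mod v))"

text \<open>2-D (u x v,4,2)-OOC, codewords identified with their supports.
  The correlation sum of A and B at shift r is the number of (i,j) in A with (i,j+r) in B.\<close>
definition is_OOC :: "nat \<Rightarrow> nat \<Rightarrow> (nat \<times> nat) set set \<Rightarrow> bool" where
  "is_OOC u v C \<longleftrightarrow>
     (\<forall>A\<in>C. A \<subseteq> pts u v \<and> card A = 4) \<and>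
     (\<forall>A\<in>C. \<forall>B\<in>C. \<forall>r<v. (A \<noteq> B \<or> r \<noteq> 0) \<longrightarrow>
        card {(i, j). (i, j) \<in> A \<and> (i, (j + r) mod v) \<in> B} \<le> 2)"

text \<open>Perfect: the v cyclic shifts of all codewords cover every 3-subset exactly once
  (counted over pairs (codeword, shift)).\<close>
definition perfect_OOC :: "nat \<Rightarrow> nat \<Rightarrow> (nat \<times> nat) set set \<Rightarrow> bool" where
  "perfect_OOC u v C \<longleftrightarrow> is_OOC u v C \<and>
     (\<forall>T. T \<subseteq> pts u v \<and> card T = 3 \<longrightarrow>
        card {(A, r). A \<in> C \<and> r < v \<and> T \<subseteq> shift v r ` A} = 1)"

definition strictly_cyclic_SQS :: "nat \<Rightarrow> nat \<Rightarrow> (nat \<times> nat) set set \<Rightarrow> bool" where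
  "strictly_cyclic_SQS u v \<B> \<longleftrightarrow>
     (\<forall>B\<in>\<B>. B \<subseteq> pts u v \<and> card B = 4) \<and>
     (\<forall>B\<in>\<B>. shift v 1 ` B \<in> \<B>) \<and>
     (\<forall>T. T \<subseteq> pts u v \<and> card T = 3 \<longrightarrow> (\<exists>!B. B \<in> \<B> \<and> T \<subseteq> B)) \<and>
     (\<forall>B\<in>\<B>. \<forall>r<v. shift v r ` B = B \<longrightarrow> r = 0)"

end

theory Submission
  imports Defs "HOL-Number_Theory.Pocklington"
begin

text \<open>
  Either object yields a Steiner quadruple system on the \<open>n = uv\<close> points of \<open>I\<^sub>u \<times> Z\<^sub>v\<close>
  (possibly with indexed blocks) whose number of blocks is a multiple of \<open>v\<close>: for an OOC the
  blocks are the \<open>v\<close> shifts of the codewords, for a strictly cyclic SQS the blocks fall into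
  shift orbits of length exactly \<open>v\<close>. Counting the triples through a fixed set of \<open>0\<close>,
  \<open>1\<close> or \<open>2\<close> points shows that \<open>n(n-1)(n-2)/24\<close>, \<open>(n-1)(n-2)/6\<close> and \<open>(n-2)/2\<close> are
  integers, so \<open>n \<equiv> 2, 4 (mod 6)\<close>, and since the first one is a multiple of \<open>v\<close>,
  \<open>24\<close> divides \<open>u(n-1)(n-2)\<close>. The residue classes then follow from \<open>3\<close> dividing neither
  \<open>u\<close> nor \<open>v\<close> and from the \<open>2\<close>-part of \<open>u(n-1)(n-2)\<close>: for odd \<open>u\<close> it forces
  \<open>uv \<equiv> 2 (mod 8)\<close>, hence \<open>v \<equiv> 2u (mod 8)\<close> as \<open>u\<^sup>2 \<equiv> 1\<close>; if \<open>u\<close> and \<open>v\<close> are both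
  even, then \<open>n - 2 \<equiv> 2 (mod 4)\<close> and so \<open>4\<close> divides \<open>u\<close>.
\<close>

lemma card_supersets_of_size:
  assumes "finite A" "S \<subseteq> A" "card S \<le> t"
  shows "card {T. T \<subseteq> A \<and> S \<subseteq> T \<and> card T = t} = (card A - card S) choose (t - card S)"
proof -
  have fin_S: "finite S" using assms finite_subset by blast
  have "bij_betw (\<lambda>X. X \<union> S) {X. X \<subseteq> A - S \<and> card X = t - card S}
          {T. T \<subseteq> A \<and> S \<subseteq> T \<and> card T = t}"
  proof (rule bij_betw_byWitness[where f' = "\<lambda>T. T - S"])
    show "(\<lambda>X. X \<union> S) ` {X. X \<subseteq> A - S \<and> card X = t - card S}
            \<subseteq> {T. T \<subseteq> A \<and> S \<subseteq> T \<and> card T = t}"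
    proof safe
      fix X assume X: "X \<subseteq> A - S" "card X = t - card S"
      then have "finite X" using assms finite_subset by blast
      with X fin_S assms show "card (X \<union> S) = t" by (subst card_Un_disjoint) auto
    qed (use assms in auto)
  qed (use fin_S in \<open>auto simp: card_Diff_subset\<close>)
  then have "card {T. T \<subseteq> A \<and> S \<subseteq> T \<and> card T = t}
               = card {X. X \<subseteq> A - S \<and> card X = t - card S}"
    by (simp add: bij_betw_same_card)
  also have "\<dots> = card (A - S) choose (t - card S)"
    using assms by (intro n_subsets) auto
  finally show ?thesis
    using assms fin_S by (simp add: card_Diff_subset)
qed

lemma two_times_choose_two: "2 * (n choose 2) = n * (n - 1)"
  using Suc_times_binomial[of 1 "n - 1"] by (cases n) (simp_all add: numeral_2_eq_2)

lemma six_times_choose_three: "6 * (n choose 3) = n * (n - 1) * (n - 2)"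
proof (cases n)
  case (Suc m)
  have "3 * (Suc m choose 3) = Suc m * (m choose 2)"
    using Suc_times_binomial[of 2 m] by (simp add: numeral_3_eq_3 numeral_2_eq_2)
  then have "6 * (n choose 3) = Suc m * (2 * (m choose 2))"
    using Suc by (simp add: mult.left_commute)
  with Suc show ?thesis
    by (simp add: two_times_choose_two algebra_simps)
qed simp

lemma mod_6_eq_2_or_4_iff: "(n::nat) mod 6 = 2 \<or> n mod 6 = 4 \<longleftrightarrow> even n \<and> \<not> 3 dvd n"
proof -
  have "\<forall>r\<in>{..<6::nat}. (r = 2 \<or> r = 4) \<longleftrightarrow> even r \<and> \<not> 3 dvd r"
    by (simp add: lessThan_nat_numeral)
  from this[rule_format, of "n mod 6"] show ?thesis
    by (simp add: dvd_mod_iff)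
qed

locale steiner_family =
  fixes t k :: nat and P :: "'a set" and I :: "'i set" and blk :: "'i \<Rightarrow> 'a set"
  assumes finite_points: "finite P"
    and finite_index: "finite I"
    and block_subset: "i \<in> I \<Longrightarrow> blk i \<subseteq> P"
    and card_block: "i \<in> I \<Longrightarrow> card (blk i) = k"
    and unique_cover: "T \<subseteq> P \<Longrightarrow> card T = t \<Longrightarrow> card {i \<in> I. T \<subseteq> blk i} = 1"
begin

lemma replication_number:
  assumes S: "S \<subseteq> P" "card S \<le> t"
  shows "(card P - card S) choose (t - card S)
           = ((k - card S) choose (t - card S)) * card {i \<in> I. S \<subseteq> blk i}"
proof -
  define Ts where "Ts = {T. T \<subseteq> P \<and> S \<subseteq> T \<and> card T = t}"
  have "finite Ts"
    unfolding Ts_def using finite_points by (auto intro: finite_subset[of _ "Pow P"])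
  have blocks_through: "card {T \<in> Ts. T \<subseteq> blk i}
                          = (if S \<subseteq> blk i then (k - card S) choose (t - card S) else 0)"
    if "i \<in> I" for i
  proof (cases "S \<subseteq> blk i")
    case True
    have "finite (blk i)" using block_subset[OF that] finite_points finite_subset by blast
    moreover have "{T \<in> Ts. T \<subseteq> blk i} = {T. T \<subseteq> blk i \<and> S \<subseteq> T \<and> card T = t}"
      unfolding Ts_def using block_subset[OF that] by auto
    ultimately show ?thesis
      using card_supersets_of_size[OF _ True S(2)] card_block[OF that] True by simp
  next
    case False
    then have no_block: "{T \<in> Ts. T \<subseteq> blk i} = {}" unfolding Ts_def by auto
    show ?thesis using False by (subst no_block) simp
  qed
  have "card Ts = (\<Sum>T\<in>Ts. card {i \<in> I. T \<subseteq> blk i})"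
    by (simp add: Ts_def unique_cover)
  also have "\<dots> = (\<Sum>i\<in>I. card {T \<in> Ts. T \<subseteq> blk i})"
    using sum.swap_restrict[OF \<open>finite Ts\<close> finite_index, of "\<lambda>_ _. 1::nat" "\<lambda>T i. T \<subseteq> blk i"]
    by simp
  also have "\<dots> = (\<Sum>i\<in>I. if S \<subseteq> blk i then (k - card S) choose (t - card S) else 0)"
    by (rule sum.cong) (simp_all add: blocks_through)
  also have "\<dots> = ((k - card S) choose (t - card S)) * card {i \<in> I. S \<subseteq> blk i}"
    using finite_index by (simp add: sum.If_cases Int_def)
  finally show ?thesis
    using card_supersets_of_size[OF finite_points S] by (simp add: Ts_def)
qed

end

locale indexed_SQS = steiner_family 3 4 P I blk
  for P :: "'a set" and I :: "'i set" and blk :: "'i \<Rightarrow> 'a set"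
begin

lemma order_product_eq_24_card_blocks: "card P * (card P - 1) * (card P - 2) = 24 * card I"
proof -
  have "card P choose 3 = 4 * card I"
    using replication_number[of "{}"] by (simp add: numeral_eq_Suc)
  then show ?thesis
    using six_times_choose_three[of "card P"] by simp
qed

lemma order_mod_6:
  assumes "2 \<le> card P"
  shows "card P mod 6 = 2 \<or> card P mod 6 = 4"
proof -
  obtain S\<^sub>2 where S\<^sub>2: "S\<^sub>2 \<subseteq> P" "card S\<^sub>2 = 2"
    using obtain_subset_with_card_n[OF assms] by metis
  obtain S\<^sub>1 where S\<^sub>1: "S\<^sub>1 \<subseteq> P" "card S\<^sub>1 = 1"
    using obtain_subset_with_card_n[of 1 P] assms by (metis Suc_leD numeral_2_eq_2 One_nat_def)
  have "card P - 2 = 2 * card {i \<in> I. S\<^sub>2 \<subseteq> blk i}"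
    using replication_number[of S\<^sub>2] S\<^sub>2 by simp
  then have "even (card P - 2)"
    by simp
  with assms have "even (card P)"
    using dvd_diffD[of 2 "card P" 2] by simp
  have "(card P - 1) choose 2 = 3 * card {i \<in> I. S\<^sub>1 \<subseteq> blk i}"
    using replication_number[of S\<^sub>1] S\<^sub>1 by (simp add: choose_two)
  then have "3 dvd 2 * ((card P - 1) choose 2)"
    by simp
  then have "3 dvd (card P - 1) * (card P - 1 - 1)"
    by (simp only: two_times_choose_two)
  then have "3 dvd card P - 1 \<or> 3 dvd card P - 1 - 1"
    by (simp add: prime_dvd_mult_iff)
  have "\<not> 3 dvd card P"
  proof
    assume "3 dvd card P"
    with \<open>3 dvd card P - 1 \<or> 3 dvd card P - 1 - 1\<close>
    have "3 dvd card P - (card P - 1) \<or> 3 dvd card P - (card P - 1 - 1)"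
      by auto
    with assms show False
      by simp
  qed
  with \<open>even (card P)\<close> show ?thesis
    by (simp add: mod_6_eq_2_or_4_iff)
qed

end

lemma shift_shift: "shift v a (shift v b p) = shift v (a + b) p"
  by (cases p) (simp add: shift_def mod_simps ac_simps)

lemma shift_mod: "shift v (r mod v) = shift v r"
  by (auto simp: shift_def mod_simps)

lemma shift_in_pts: "p \<in> pts u v \<Longrightarrow> shift v r p \<in> pts u v"
  by (cases p) (auto simp: shift_def pts_def)

lemma shift_multiple_of_order: "p \<in> pts u v \<Longrightarrow> shift v (m * v) p = p"
  by (cases p) (simp add: shift_def pts_def)

lemma shift_inverse:
  assumes "p \<in> pts u v"
  shows "shift v (v - r mod v) (shift v r p) = p"
proof -
  have "r mod v < v"
    using assms by (auto simp: pts_def)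
  then have "v - r mod v + r = (r div v + 1) * v"
    using div_mult_mod_eq[of r v] unfolding distrib_right by linarith
  then show ?thesis
    using assms by (simp only: shift_shift shift_multiple_of_order)
qed

lemma inj_on_shift: "inj_on (shift v r) (pts u v)"
proof (rule inj_onI)
  fix p q
  assume "p \<in> pts u v" "q \<in> pts u v" "shift v r p = shift v r q"
  then show "p = q"
    by (metis shift_inverse)
qed

lemma image_shift_shift: "shift v a ` shift v b ` B = shift v (a + b) ` B"
  by (simp add: image_image shift_shift)

lemma image_shift_multiple_of_order:
  assumes "B \<subseteq> pts u v"
  shows "shift v (m * v) ` B = B"
proof -
  have "shift v (m * v) ` B = id ` B"
    using assms by (intro image_cong) (auto simp: shift_multiple_of_order)
  then show ?thesis
    by simp
qed

lemma image_shift_add_multiple: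
  "B \<subseteq> pts u v \<Longrightarrow> shift v (a + m * v) ` B = shift v a ` B"
  by (metis image_shift_shift image_shift_multiple_of_order)

lemma image_shift_cancel:
  assumes "B' \<subseteq> pts u v" "s \<le> v" "shift v r ` B = shift v s ` B'"
  shows "B' = shift v (v - s + r) ` B"
proof -
  have "B' = shift v (v - s) ` shift v s ` B'"
    using image_shift_multiple_of_order[OF assms(1), of 1] assms(2) by (simp add: image_shift_shift)
  also have "\<dots> = shift v (v - s) ` shift v r ` B"
    using assms(3) by simp
  finally show ?thesis
    by (simp add: image_shift_shift)
qed

definition shift_orbit :: "nat \<Rightarrow> (nat \<times> nat) set \<Rightarrow> (nat \<times> nat) set set" where
  "shift_orbit v B = (\<lambda>r. shift v r ` B) ` {..<v}"

lemma shift_orbit_subset: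
  assumes "B \<in> Bs" "B \<subseteq> pts u v" "\<And>B. B \<in> Bs \<Longrightarrow> shift v 1 ` B \<in> Bs"
  shows "shift_orbit v B \<subseteq> Bs"
proof -
  have "shift v r ` B \<in> Bs" for r
  proof (induction r)
    case 0
    then show ?case
      using image_shift_multiple_of_order[OF assms(2), of 0] assms(1) by simp
  next
    case (Suc r)
    then show ?case
      using assms(3) by (metis image_shift_shift plus_1_eq_Suc)
  qed
  then show ?thesis
    by (auto simp: shift_orbit_def)
qed

lemma card_shift_orbit:
  assumes "B \<subseteq> pts u v" and stabilizer: "\<And>r. r < v \<Longrightarrow> shift v r ` B = B \<Longrightarrow> r = 0"
  shows "card (shift_orbit v B) = v"
proof -
  have no_repetition: "r = s" if "r < s" "s < v" "shift v r ` B = shift v s ` B" for r s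
  proof -
    have "B = shift v (v - r + s) ` B"
      using image_shift_cancel[OF assms(1), of r s B] that by simp
    also have "v - r + s = (s - r) + 1 * v"
      using that by simp
    also have "shift v \<dots> ` B = shift v (s - r) ` B"
      by (rule image_shift_add_multiple[OF assms(1)])
    finally have "shift v (s - r) ` B = B"
      by simp
    moreover have "s - r < v"
      using that by simp
    ultimately show "r = s"
      using stabilizer[of "s - r"] \<open>r < s\<close> by simp
  qed
  have "inj_on (\<lambda>r. shift v r ` B) {..<v}"
  proof (rule inj_onI)
    fix r s
    assume "r \<in> {..<v}" "s \<in> {..<v}" "shift v r ` B = shift v s ` B"
    then show "r = s"
      using no_repetition[of r s] no_repetition[of s r] by (cases r s rule: linorder_cases) auto
  qed
  then show ?thesis
    by (simp add: shift_orbit_def card_image)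
qed

lemma shift_orbit_subset_if_common_element:
  assumes "B \<subseteq> pts u v" "B' \<subseteq> pts u v"
    and "X \<in> shift_orbit v B" "X \<in> shift_orbit v B'"
  shows "shift_orbit v B' \<subseteq> shift_orbit v B"
proof
  obtain r s where rs: "r < v" "s < v" "X = shift v r ` B" "X = shift v s ` B'"
    using assms(3,4) by (auto simp: shift_orbit_def)
  then have B': "B' = shift v (v - s + r) ` B"
    using image_shift_cancel[OF assms(2), of s r B] by simp
  fix Y
  assume "Y \<in> shift_orbit v B'"
  then obtain t where "Y = shift v t ` B'"
    by (auto simp: shift_orbit_def)
  then have "Y = shift v ((t + (v - s + r)) mod v) ` B"
    using B' by (simp add: image_shift_shift shift_mod)
  then show "Y \<in> shift_orbit v B"
    using rs by (auto simp: shift_orbit_def)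
qed

lemma order_dvd_card_of_strictly_cyclic_family:
  assumes "0 < v" "finite Bs"
    and subset: "\<And>B. B \<in> Bs \<Longrightarrow> B \<subseteq> pts u v"
    and closed: "\<And>B. B \<in> Bs \<Longrightarrow> shift v 1 ` B \<in> Bs"
    and stabilizer: "\<And>B r. B \<in> Bs \<Longrightarrow> r < v \<Longrightarrow> shift v r ` B = B \<Longrightarrow> r = 0"
  shows "v dvd card Bs"
proof -
  have "B \<in> shift_orbit v B" if "B \<in> Bs" for B
  proof -
    have "shift v 0 ` B = B"
      using image_shift_multiple_of_order[OF subset[OF that], of 0] by simp
    then show ?thesis
      unfolding shift_orbit_def using \<open>0 < v\<close> by (intro rev_image_eqI[of 0]) simp_all
  qed
  moreover have "shift_orbit v B \<subseteq> Bs" if "B \<in> Bs" for B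
    using shift_orbit_subset[OF that subset[OF that] closed] .
  ultimately have orbits_cover: "\<Union> (shift_orbit v ` Bs) = Bs"
    by blast
  have "v * card (shift_orbit v ` Bs) = card (\<Union> (shift_orbit v ` Bs))"
  proof (rule card_partition)
    show "finite (shift_orbit v ` Bs)" "finite (\<Union> (shift_orbit v ` Bs))"
      using \<open>finite Bs\<close> orbits_cover by simp_all
    show "card Orb = v" if orbit: "Orb \<in> shift_orbit v ` Bs" for Orb
    proof -
      obtain B where "B \<in> Bs" "Orb = shift_orbit v B"
        using orbit by blast
      then show ?thesis
        using card_shift_orbit[OF subset stabilizer] by simp
    qed
    show "Orb \<inter> Orb' = {}"
      if orbits: "Orb \<in> shift_orbit v ` Bs" "Orb' \<in> shift_orbit v ` Bs" and "Orb \<noteq> Orb'"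
      for Orb Orb'
    proof (rule ccontr)
      assume "Orb \<inter> Orb' \<noteq> {}"
      then obtain X where X: "X \<in> Orb" "X \<in> Orb'"
        by blast
      obtain B B' where "B \<in> Bs" "B' \<in> Bs" "Orb = shift_orbit v B" "Orb' = shift_orbit v B'"
        using orbits by blast
      then have "Orb' \<subseteq> Orb" "Orb \<subseteq> Orb'"
        using shift_orbit_subset_if_common_element[OF subset subset] X by simp_all
      with \<open>Orb \<noteq> Orb'\<close> show False
        by blast
    qed
  qed
  then show ?thesis
    unfolding orbits_cover by (metis dvd_triv_left)
qed

lemma finite_family_of_subsets_of_pts: "(\<And>B. B \<in> Bs \<Longrightarrow> B \<subseteq> pts u v) \<Longrightarrow> finite Bs"
  by (rule finite_subset[of _ "Pow (pts u v)"]) (auto simp: pts_def)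

lemma perfect_OOC_indexed_SQS:
  assumes "perfect_OOC u v C"
  shows "indexed_SQS (pts u v) (C \<times> {..<v}) (\<lambda>(A, r). shift v r ` A)"
proof -
  have codeword: "A \<subseteq> pts u v" "card A = 4" if "A \<in> C" for A
    using assms that by (auto simp: perfect_OOC_def is_OOC_def)
  show ?thesis
  proof
    show "finite (pts u v)" "finite (C \<times> {..<v})"
      using finite_family_of_subsets_of_pts[of C u v] codeword by (simp_all add: pts_def)
    show "(case i of (A, r) \<Rightarrow> shift v r ` A) \<subseteq> pts u v" if "i \<in> C \<times> {..<v}" for i
      using that codeword shift_in_pts by fastforce
    show "card (case i of (A, r) \<Rightarrow> shift v r ` A) = 4" if i: "i \<in> C \<times> {..<v}" for i
    proof -
      obtain A r where "i = (A, r)" "A \<in> C"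
        using i by blast
      then show ?thesis
        using codeword card_image[OF inj_on_subset[OF inj_on_shift[of v r u]]] by simp
    qed
    show "card {i \<in> C \<times> {..<v}. T \<subseteq> (case i of (A, r) \<Rightarrow> shift v r ` A)} = 1"
      if "T \<subseteq> pts u v" "card T = 3" for T
    proof -
      have "{i \<in> C \<times> {..<v}. T \<subseteq> (case i of (A, r) \<Rightarrow> shift v r ` A)}
              = {(A, r). A \<in> C \<and> r < v \<and> T \<subseteq> shift v r ` A}"
        by auto
      moreover have "card {(A, r). A \<in> C \<and> r < v \<and> T \<subseteq> shift v r ` A} = 1"
        using assms that unfolding perfect_OOC_def by blast
      ultimately show ?thesis
        by simp
    qed
  qed
qed

lemma strictly_cyclic_SQS_indexed_SQS:
  assumes "strictly_cyclic_SQS u v Bs"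
  shows "indexed_SQS (pts u v) Bs id"
proof
  have block: "B \<subseteq> pts u v" "card B = 4" if "B \<in> Bs" for B
    using assms that by (auto simp: strictly_cyclic_SQS_def)
  show "finite (pts u v)"
    by (simp add: pts_def)
  show "finite Bs"
    by (rule finite_family_of_subsets_of_pts) (rule block)
  show "id B \<subseteq> pts u v" "card (id B) = 4" if "B \<in> Bs" for B
    using block that by simp_all
  show "card {B \<in> Bs. T \<subseteq> id B} = 1" if "T \<subseteq> pts u v" "card T = 3" for T
  proof -
    have "\<exists>!B. B \<in> Bs \<and> T \<subseteq> B"
      using assms that by (simp add: strictly_cyclic_SQS_def)
    then obtain B where "B \<in> Bs" "T \<subseteq> B" "\<And>C. C \<in> Bs \<Longrightarrow> T \<subseteq> C \<Longrightarrow> C = B"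
      by blast
    then have "{C \<in> Bs. T \<subseteq> C} = {B}"
      by blast
    then show ?thesis
      by simp
  qed
qed

lemma strictly_cyclic_SQS_order_dvd_card:
  assumes "strictly_cyclic_SQS u v Bs" "0 < v"
  shows "v dvd card Bs"
proof (rule order_dvd_card_of_strictly_cyclic_family[of v Bs u])
  show subset: "B \<subseteq> pts u v" "shift v 1 ` B \<in> Bs" if "B \<in> Bs" for B
    using assms(1) that by (simp_all add: strictly_cyclic_SQS_def)
  show "finite Bs"
    using finite_family_of_subsets_of_pts subset(1) by blast
  show "r = 0" if "B \<in> Bs" "r < v" "shift v r ` B = B" for B r
    using assms(1) that by (simp add: strictly_cyclic_SQS_def)
qed (fact assms(2))

lemma order_conditions_of_cyclic_indexed_SQS:
  assumes "indexed_SQS (pts u v) I blk" "v dvd card I" "2 \<le> u * v"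
  shows "(u * v mod 6 = 2 \<or> u * v mod 6 = 4) \<and> 24 dvd u * (u * v - 1) * (u * v - 2)"
proof
  have card_pts: "card (pts u v) = u * v"
    by (simp add: pts_def card_cartesian_product)
  show "u * v mod 6 = 2 \<or> u * v mod 6 = 4"
    using indexed_SQS.order_mod_6[OF assms(1)] assms(3) by (simp add: card_pts)
  obtain m where "card I = v * m"
    using assms(2) by blast
  then have "v * (u * (u * v - 1) * (u * v - 2)) = v * (24 * m)"
    using indexed_SQS.order_product_eq_24_card_blocks[OF assms(1)]
    by (simp add: card_pts ac_simps)
  moreover have "0 < v"
    using assms(3) by (cases v) simp_all
  ultimately show "24 dvd u * (u * v - 1) * (u * v - 2)"
    by simp
qed

lemma residues_mod_8_of_eight_dvd:
  fixes u v :: nat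
  assumes "even (u * v)" "u * v \<noteq> 0"
    and eight_dvd: "8 dvd u * (u * v - 1) * (u * v - 2)"
  shows "u mod 4 = 1 \<and> v mod 8 = 2 \<or> u mod 4 = 3 \<and> v mod 8 = 6 \<or>
         even u \<and> odd v \<or> 4 dvd u \<and> even v"
proof -
  define n where "n = u * v"
  have n: "even n" "2 \<le> n"
    using assms by (auto simp: n_def elim: evenE)
  then have "coprime 8 (n - 1)"
    using coprime_power_left_iff[of 2 3 "n - 1"] by simp
  then have "8 dvd u * (n - 2)"
    using eight_dvd coprime_dvd_mult_left_iff[of 8 "n - 1" "u * (n - 2)"]
    by (simp add: n_def ac_simps)
  consider "odd u" | "even u" "odd v" | "even u" "even v"
    by blast
  then show ?thesis
  proof cases
    case 1
    have "coprime 8 u"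
      using coprime_power_left_iff[of 2 3 u] 1 by simp
    then have "8 dvd n - 2"
      using \<open>8 dvd u * (n - 2)\<close> coprime_dvd_mult_right_iff by blast
    then have "n mod 8 = 2"
      using mod_eq_dvd_iff_nat[OF \<open>2 \<le> n\<close>, of 8] by simp
    have "u\<^sup>2 mod 8 = 1"
      using square_mod_8_eq_1_iff[of u] 1 by (simp add: cong_def)
    then have "v mod 8 = (u\<^sup>2 * v) mod 8"
      by (simp add: mod_mult_left_eq[of "u\<^sup>2" 8 v, symmetric])
    also have "\<dots> = (u * n) mod 8"
      by (simp add: n_def power2_eq_square ac_simps)
    also have "\<dots> = 2 * u mod 8"
      using \<open>n mod 8 = 2\<close> by (metis mod_mult_right_eq mult.commute)
    also have "\<dots> = 2 * (u mod 4)"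
      using mod_mult_mult1[of 2 u 4] by simp
    finally have "v mod 8 = 2 * (u mod 4)" .
    moreover have "u mod 4 = 1 \<or> u mod 4 = 3"
    proof -
      have "\<forall>r\<in>{..<4::nat}. odd r \<longrightarrow> r = 1 \<or> r = 3"
        by (simp add: lessThan_nat_numeral)
      from this[rule_format, of "u mod 4"] 1 show ?thesis
        by (simp add: dvd_mod_iff)
    qed
    ultimately show ?thesis
      by auto
  next
    case 2
    then show ?thesis
      by blast
  next
    case 3
    then have "4 dvd n"
      by (simp add: n_def mult_dvd_mono[of 2 u 2 v, simplified])
    then obtain k where "n = 4 * k"
      by blast
    define m where "m = 2 * k - 1"
    have "k \<noteq> 0"
      using \<open>2 \<le> n\<close> \<open>n = 4 * k\<close> by simp
    then have m: "n - 2 = 2 * m" "odd m"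
      using \<open>n = 4 * k\<close> by (simp_all add: m_def)
    have "2 * 4 dvd 2 * (u * m)"
      using \<open>8 dvd u * (n - 2)\<close> m(1) by (simp add: ac_simps)
    then have "4 dvd u * m"
      using dvd_times_left_cancel_iff[of "2::nat" 4 "u * m"] by simp
    moreover have "coprime 4 m"
      using coprime_power_left_iff[of 2 2 m] m(2) by simp
    ultimately have "4 dvd u"
      using coprime_dvd_mult_left_iff by blast
    with 3 show ?thesis
      by blast
  qed
qed

lemma residues_mod_24_prime_to_3:
  fixes v :: nat
  assumes "\<not> 3 dvd v"
  shows "(v mod 8 = 2 \<longrightarrow> v mod 24 \<in> {2, 10}) \<and> (v mod 8 = 6 \<longrightarrow> v mod 24 \<in> {14, 22}) \<and>
         (odd v \<longrightarrow> v mod 6 \<in> {1, 5}) \<and> (even v \<longrightarrow> v mod 6 \<in> {2, 4})"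
proof -
  have "\<forall>r\<in>{..<24::nat}. \<not> 3 dvd r \<longrightarrow>
          (r mod 8 = 2 \<longrightarrow> r \<in> {2, 10}) \<and> (r mod 8 = 6 \<longrightarrow> r \<in> {14, 22}) \<and>
          (odd r \<longrightarrow> r mod 6 \<in> {1, 5}) \<and> (even r \<longrightarrow> r mod 6 \<in> {2, 4})"
    by (simp add: lessThan_nat_numeral)
  from this[rule_format, of "v mod 24"] assms show ?thesis
    by (simp add: dvd_mod_iff mod_mod_cancel)
qed

lemma residues_mod_12_prime_to_3:
  fixes u :: nat
  assumes "\<not> 3 dvd u"
  shows "(u mod 4 = 1 \<longrightarrow> u mod 12 \<in> {1, 5}) \<and> (u mod 4 = 3 \<longrightarrow> u mod 12 \<in> {7, 11}) \<and>
         (4 dvd u \<longrightarrow> u mod 12 \<in> {4, 8}) \<and> (even u \<longrightarrow> u mod 6 \<in> {2, 4})"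
proof -
  have "\<forall>r\<in>{..<12::nat}. \<not> 3 dvd r \<longrightarrow>
          (r mod 4 = 1 \<longrightarrow> r \<in> {1, 5}) \<and> (r mod 4 = 3 \<longrightarrow> r \<in> {7, 11}) \<and>
          (4 dvd r \<longrightarrow> r \<in> {4, 8}) \<and> (even r \<longrightarrow> r mod 6 \<in> {2, 4})"
    by (simp add: lessThan_nat_numeral)
  from this[rule_format, of "u mod 12"] assms show ?thesis
    by (simp add: dvd_mod_iff mod_mod_cancel)
qed

lemma residues_of_admissible_order:
  fixes u v :: nat
  assumes "u * v mod 6 = 2 \<or> u * v mod 6 = 4"
    and "8 dvd u * (u * v - 1) * (u * v - 2)"
  shows "(u mod 12 \<in> {1, 5} \<and> v mod 24 \<in> {2, 10}) \<or>
         (u mod 12 \<in> {7, 11} \<and> v mod 24 \<in> {14, 22}) \<or>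
         (u mod 6 \<in> {2, 4} \<and> v mod 6 \<in> {1, 5}) \<or>
         (u mod 12 \<in> {4, 8} \<and> v mod 6 \<in> {2, 4})"
proof -
  have "even (u * v)" "\<not> 3 dvd u * v"
    using assms(1) by (simp_all add: mod_6_eq_2_or_4_iff)
  then have "u * v \<noteq> 0"
    by (metis dvd_0_right)
  have "\<not> 3 dvd u" "\<not> 3 dvd v"
    using \<open>\<not> 3 dvd u * v\<close> by auto
  note u_residues = residues_mod_12_prime_to_3[OF \<open>\<not> 3 dvd u\<close>]
    and v_residues = residues_mod_24_prime_to_3[OF \<open>\<not> 3 dvd v\<close>]
  from residues_mod_8_of_eight_dvd[OF \<open>even (u * v)\<close> \<open>u * v \<noteq> 0\<close> assms(2)]
  show ?thesis
    using u_residues v_residues by blast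
qed

theorem lemma3p5:
  fixes u v :: nat
  assumes nontriv: "2 \<le> u * v"
    and ex: "(\<exists>C. perfect_OOC u v C) \<or> (\<exists>\<B>. strictly_cyclic_SQS u v \<B>)"
  shows "(u * v mod 6 = 2 \<or> u * v mod 6 = 4) \<and> 24 dvd u * (u * v - 1) * (u * v - 2)
    \<and> ((u mod 12 \<in> {1, 5} \<and> v mod 24 \<in> {2, 10}) \<or>
       (u mod 12 \<in> {7, 11} \<and> v mod 24 \<in> {14, 22}) \<or>
       (u mod 6 \<in> {2, 4} \<and> v mod 6 \<in> {1, 5}) \<or>
       (u mod 12 \<in> {4, 8} \<and> v mod 6 \<in> {2, 4}))"
proof -
  have "0 < v"
    using nontriv by (cases v) simp_all
  have conditions: "(u * v mod 6 = 2 \<or> u * v mod 6 = 4) \<and> 24 dvd u * (u * v - 1) * (u * v - 2)"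
    using ex
  proof (elim disjE exE)
    fix C
    assume "perfect_OOC u v C"
    then have "indexed_SQS (pts u v) (C \<times> {..<v}) (\<lambda>(A, r). shift v r ` A)"
      by (rule perfect_OOC_indexed_SQS)
    moreover have "v dvd card (C \<times> {..<v})"
      by (simp add: card_cartesian_product)
    ultimately show ?thesis
      using nontriv by (rule order_conditions_of_cyclic_indexed_SQS)
  next
    fix Bs
    assume Bs: "strictly_cyclic_SQS u v Bs"
    show ?thesis
      using strictly_cyclic_SQS_indexed_SQS[OF Bs] strictly_cyclic_SQS_order_dvd_card[OF Bs \<open>0 < v\<close>]
        nontriv
      by (rule order_conditions_of_cyclic_indexed_SQS)
  qed
  moreover have "8 dvd u * (u * v - 1) * (u * v - 2)"
    using conditions dvd_trans[of "8::nat" 24] by simp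
  ultimately show ?thesis
    using residues_of_admissible_order by blast
qed

end
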